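(* Let $\mathcal{R}$ be a set of rules on a finite set $Q$, let $X\subseteq Q$, and let $S\in\mathcal{K}(\mathcal{R})$ be a proper subset of $X$. Define $\mathcal{R}^X_S=\{(A\cap X,q): (A,q)\in\mathcal{R},\ A\cap S=\emptyset,\ q\in X\setminus A\}$. Then for $x\in X\setminus S$, the set $S\cup\{x\}$ belongs to $\mathcal{K}(\mathcal{R})$ if and only if $\mathcal{R}^X_S$ contains no rule of the form $(A,x)$.
   Context: A rule on $Q$ is a pair $(A,q)$ with $A\subseteq Q$, $q\in Q$; it accepts $Y\subseteq Q$ if $q\in Y$ implies $Y\cap A\neq\emptyset$. $\mathcal{K}(\mathcal{R})$ is the family of subsets of $Q$ accepted by all rules of $\mathcal{R}$. *)

theory Defs
  imports Main
begin

type_synonym 'a rule = "'a set \<times> 'a"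

definition is_rule_on :: "'a set \<Rightarrow> 'a rule \<Rightarrow> bool" where
  "is_rule_on Q r \<longleftrightarrow> fst r \<subseteq> Q \<and> snd r \<in> Q"

definition accepts :: "'a rule \<Rightarrow> 'a set \<Rightarrow> bool" where
  "accepts r Y \<longleftrightarrow> (snd r \<in> Y \<longrightarrow> Y \<inter> fst r \<noteq> {})"

definition K :: "'a set \<Rightarrow> 'a rule set \<Rightarrow> 'a set set" where
  "K Q R = {Y. Y \<subseteq> Q \<and> (\<forall>r\<in>R. accepts r Y)}"

definition restr_rules :: "'a rule set \<Rightarrow> 'a set \<Rightarrow> 'a set \<Rightarrow> 'a rule set" where
  "restr_rules R X S = {(A \<inter> X, q) | A q. (A, q) \<in> R \<and> A \<inter> S = {} \<and> q \<in> X - A}"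

end

theory Submission
  imports Defs
begin

text \<open>Since \<open>S\<close> is accepted by every rule, the only rules that can reject \<open>insert x S\<close>
  are those with conclusion \<open>x\<close> whose premises avoid \<open>insert x S\<close>; these are exactly the
  rules that survive in \<open>restr_rules R X S\<close> with conclusion \<open>x\<close>.\<close>

lemma accepts_insert_iff:
  assumes "accepts (A, q) S"
  shows "accepts (A, q) (insert x S) \<longleftrightarrow> (q = x \<longrightarrow> insert x S \<inter> A \<noteq> {})"
  using assms unfolding accepts_def by auto

lemma insert_in_K_iff:
  assumes "S \<in> K Q R" and "x \<in> Q"
  shows "insert x S \<in> K Q R \<longleftrightarrow> (\<forall>A. (A, x) \<in> R \<longrightarrow> insert x S \<inter> A \<noteq> {})"
proof -
  have "\<forall>r\<in>R. accepts r S" using assms(1) unfolding K_def by blast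
  then have "(\<forall>r\<in>R. accepts r (insert x S)) \<longleftrightarrow> (\<forall>A. (A, x) \<in> R \<longrightarrow> insert x S \<inter> A \<noteq> {})"
    using accepts_insert_iff by fastforce
  moreover have "insert x S \<subseteq> Q" using assms unfolding K_def by blast
  ultimately show ?thesis unfolding K_def by blast
qed

lemma restr_rules_conclusion_iff:
  assumes "x \<in> X"
  shows "(\<exists>A. (A, x) \<in> restr_rules R X S) \<longleftrightarrow> (\<exists>A. (A, x) \<in> R \<and> insert x S \<inter> A = {})"
  using assms unfolding restr_rules_def by blast

theorem lemma3p2:
  fixes Q X S :: "'a set" and R :: "'a rule set" and x :: 'a
  assumes "finite Q"
    and "\<forall>r\<in>R. is_rule_on Q r"
    and "X \<subseteq> Q"
    and "S \<in> K Q R"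
    and "S \<subset> X"
    and "x \<in> X - S"
  shows "insert x S \<in> K Q R \<longleftrightarrow> \<not> (\<exists>A. (A, x) \<in> restr_rules R X S)"
proof -
  have "x \<in> Q" using assms(3,6) by blast
  then show ?thesis
    using insert_in_K_iff[OF assms(4)] restr_rules_conclusion_iff[of x X R S] assms(6) by blast
qed

end
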